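(* Let $(R,\mathfrak{m})$ be a local perinormal domain. If $S$ is an integral overring of $R$ such that the induced map $\operatorname{Spec} S \to \operatorname{Spec} R$ is a bijection, then $S = R$.
   Context: All rings are commutative with identity; "local" means having a unique maximal ideal; an overring of a domain $R$ is a ring between $R$ and its fraction field. A ring extension $A \subseteq B$ satisfies going-down if whenever $\mathfrak{p} \subset \mathfrak{q}$ are primes of $A$ and $Q$ is a prime of $B$ with $Q \cap A = \mathfrak{q}$, there is a prime $P \subseteq Q$ of $B$ with $P \cap A = \mathfrak{p}$. A domain $R$ is perinormal if every local overring $S$ of $R$ such that $R \subseteq S$ satisfies going-down is a localization of $R$. *)

theory Defs
  imports Main
begin

text \<open>Convention: every domain is realised as a subring of an ambient field of type 'k
  (a domain is isomorphic to a subring of its fraction field); its fraction field is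
  realised as the set of quotients inside 'k.\<close>

definition subring :: "'k::field set \<Rightarrow> bool" where
  "subring A \<longleftrightarrow> 0 \<in> A \<and> 1 \<in> A \<and>
     (\<forall>x\<in>A. \<forall>y\<in>A. x + y \<in> A \<and> x - y \<in> A \<and> x * y \<in> A)"

definition frac :: "'k::field set \<Rightarrow> 'k set" where
  "frac R = {a / b | a b. a \<in> R \<and> b \<in> R \<and> b \<noteq> 0}"

definition overring :: "'k::field set \<Rightarrow> 'k set \<Rightarrow> bool" where
  "overring R S \<longleftrightarrow> subring S \<and> R \<subseteq> S \<and> S \<subseteq> frac R"

definition is_ideal :: "'k::field set \<Rightarrow> 'k set \<Rightarrow> bool" where
  "is_ideal A I \<longleftrightarrow> I \<subseteq> A \<and> 0 \<in> I \<and>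
     (\<forall>x\<in>I. \<forall>y\<in>I. x + y \<in> I) \<and> (\<forall>a\<in>A. \<forall>x\<in>I. a * x \<in> I)"

definition is_prime :: "'k::field set \<Rightarrow> 'k set \<Rightarrow> bool" where
  "is_prime A P \<longleftrightarrow> is_ideal A P \<and> P \<noteq> A \<and>
     (\<forall>a\<in>A. \<forall>b\<in>A. a * b \<in> P \<longrightarrow> a \<in> P \<or> b \<in> P)"

definition Spec :: "'k::field set \<Rightarrow> 'k set set" where
  "Spec A = {P. is_prime A P}"

definition is_maximal :: "'k::field set \<Rightarrow> 'k set \<Rightarrow> bool" where
  "is_maximal A M \<longleftrightarrow> is_ideal A M \<and> M \<noteq> A \<and>
     (\<forall>I. is_ideal A I \<and> M \<subseteq> I \<longrightarrow> I = M \<or> I = A)"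

definition local_ring :: "'k::field set \<Rightarrow> bool" where
  "local_ring A \<longleftrightarrow> (\<exists>!M. is_maximal A M)"

definition going_down :: "'k::field set \<Rightarrow> 'k set \<Rightarrow> bool" where
  "going_down A B \<longleftrightarrow>
     (\<forall>p q Q. is_prime A p \<and> is_prime A q \<and> p \<subseteq> q \<and> is_prime B Q \<and> Q \<inter> A = q \<longrightarrow>
        (\<exists>P. is_prime B P \<and> P \<subseteq> Q \<and> P \<inter> A = p))"

definition is_localization :: "'k::field set \<Rightarrow> 'k set \<Rightarrow> bool" where
  "is_localization R S \<longleftrightarrow> (\<exists>T. T \<subseteq> R \<and> 1 \<in> T \<and> 0 \<notin> T \<and>
      (\<forall>x\<in>T. \<forall>y\<in>T. x * y \<in> T) \<and> S = {r / t | r t. r \<in> R \<and> t \<in> T})"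

definition perinormal :: "'k::field set \<Rightarrow> bool" where
  "perinormal R \<longleftrightarrow> (\<forall>S. overring R S \<and> local_ring S \<and> going_down R S \<longrightarrow> is_localization R S)"

definition integral_over :: "'k::field set \<Rightarrow> 'k set \<Rightarrow> bool" where
  "integral_over R S \<longleftrightarrow> (\<forall>s\<in>S. \<exists>n c. (\<forall>i<n. c i \<in> R) \<and> s ^ n + (\<Sum>i<n. c i * s ^ i) = 0)"

end

theory Submission
  imports Defs
begin

text \<open>The key fact is lying over for integral extensions: an ideal of S maximal among
  those missing R - q contracts exactly to q. Every maximal ideal of S is such an ideal for
  the maximal ideal of R, so injectivity of Spec S \<rightarrow> Spec R makes S local; enlarging a
  prime of S over p maximally away from R - q gives a prime over q, which injectivity
  identifies with the given one, so R \<subseteq> S has going-down. Perinormality then makes S a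
  localization of R, and a localization integral over R is R itself, because an inverse
  1/t that is integral over R already lies in R.\<close>

lemma subring_0: "subring A \<Longrightarrow> 0 \<in> A"
  and subring_1: "subring A \<Longrightarrow> 1 \<in> A"
  and subring_add: "subring A \<Longrightarrow> x \<in> A \<Longrightarrow> y \<in> A \<Longrightarrow> x + y \<in> A"
  and subring_diff: "subring A \<Longrightarrow> x \<in> A \<Longrightarrow> y \<in> A \<Longrightarrow> x - y \<in> A"
  and subring_mult: "subring A \<Longrightarrow> x \<in> A \<Longrightarrow> y \<in> A \<Longrightarrow> x * y \<in> A"
  unfolding subring_def by blast+

lemma subring_uminus: "subring A \<Longrightarrow> x \<in> A \<Longrightarrow> - x \<in> A"
  by (metis diff_0 subring_0 subring_diff)

lemma subring_power: "subring A \<Longrightarrow> x \<in> A \<Longrightarrow> x ^ n \<in> A"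
  by (induction n) (auto intro: subring_1 subring_mult)

lemma subring_sum: "subring A \<Longrightarrow> (\<And>i. i < (n::nat) \<Longrightarrow> f i \<in> A) \<Longrightarrow> (\<Sum>i<n. f i) \<in> A"
  by (induction n) (auto intro: subring_0 subring_add)

lemma ideal_subset: "is_ideal A I \<Longrightarrow> x \<in> I \<Longrightarrow> x \<in> A"
  and ideal_0: "is_ideal A I \<Longrightarrow> 0 \<in> I"
  and ideal_add: "is_ideal A I \<Longrightarrow> x \<in> I \<Longrightarrow> y \<in> I \<Longrightarrow> x + y \<in> I"
  and ideal_mult_left: "is_ideal A I \<Longrightarrow> a \<in> A \<Longrightarrow> x \<in> I \<Longrightarrow> a * x \<in> I"
  unfolding is_ideal_def by blast+

lemma ideal_mult_right: "is_ideal A I \<Longrightarrow> a \<in> A \<Longrightarrow> x \<in> I \<Longrightarrow> x * a \<in> I"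
  by (metis ideal_mult_left mult.commute)

lemma ideal_diff: "subring A \<Longrightarrow> is_ideal A I \<Longrightarrow> x \<in> I \<Longrightarrow> y \<in> I \<Longrightarrow> x - y \<in> I"
  using ideal_add ideal_mult_left[of A I "-1" y] subring_uminus subring_1 by fastforce

lemma ideal_sum: "is_ideal A I \<Longrightarrow> (\<And>i. i < (n::nat) \<Longrightarrow> f i \<in> I) \<Longrightarrow> (\<Sum>i<n. f i) \<in> I"
  by (induction n) (auto intro: ideal_0 ideal_add)

lemma ideal_power: "is_ideal A I \<Longrightarrow> a \<in> I \<Longrightarrow> 0 < k \<Longrightarrow> a ^ k \<in> I"
proof (induction k)
  case (Suc k)
  then show ?case
    by (cases k) (auto simp: mult.commute intro: ideal_mult_right ideal_subset)
qed simp

lemma ideal_eq_if_one_mem: "is_ideal A I \<Longrightarrow> 1 \<in> I \<Longrightarrow> I = A"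
  using ideal_mult_left[of A I _ 1] ideal_subset by force

lemma ideal_contraction:
  "is_ideal S I \<Longrightarrow> R \<subseteq> S \<Longrightarrow> subring R \<Longrightarrow> is_ideal R (I \<inter> R)"
  unfolding is_ideal_def subring_def by blast

lemma prime_ideal: "is_prime A P \<Longrightarrow> is_ideal A P"
  unfolding is_prime_def by blast

lemma prime_one_not_mem: "is_prime A P \<Longrightarrow> 1 \<notin> P"
  unfolding is_prime_def using ideal_eq_if_one_mem by blast

lemma prime_power_mem:
  assumes "subring A" "is_prime A P" "t \<in> A" "t ^ n \<in> P"
  shows "t \<in> P"
  using assms(4)
proof (induction n)
  case 0
  then show ?case using prime_one_not_mem[OF assms(2)] by simp
next
  case (Suc n)
  then show ?case
    using assms(2,3) subring_power[OF assms(1,3)] unfolding is_prime_def by auto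
qed

subsection \<open>Ideals maximal with respect to missing a set\<close>

definition max_disjoint :: "'k::field set \<Rightarrow> 'k set \<Rightarrow> 'k set \<Rightarrow> bool" where
  "max_disjoint A U Q \<longleftrightarrow> is_ideal A Q \<and> Q \<inter> U = {} \<and>
     (\<forall>I. is_ideal A I \<and> Q \<subseteq> I \<and> I \<inter> U = {} \<longrightarrow> I = Q)"

lemma max_disjoint_exists:
  assumes J: "is_ideal A J" and JU: "J \<inter> U = {}"
  shows "\<exists>Q. J \<subseteq> Q \<and> max_disjoint A U Q"
proof -
  define F where "F = {I. is_ideal A I \<and> J \<subseteq> I \<and> I \<inter> U = {}}"
  have "\<forall>C\<in>chains F. \<exists>V\<in>F. \<forall>X\<in>C. X \<subseteq> V"
  proof
    fix C assume C: "C \<in> chains F"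
    show "\<exists>V\<in>F. \<forall>X\<in>C. X \<subseteq> V"
    proof (cases "C = {}")
      case True
      then show ?thesis using J JU unfolding F_def by auto
    next
      case False
      have CF: "C \<subseteq> F" and chain: "\<forall>X\<in>C. \<forall>Y\<in>C. X \<subseteq> Y \<or> Y \<subseteq> X"
        using C unfolding chains_def chain_subset_def by auto
      have "\<Union>C \<in> F"
        unfolding F_def is_ideal_def
      proof (intro CollectI conjI ballI)
        show "\<Union>C \<subseteq> A" "\<Union>C \<inter> U = {}" using CF unfolding F_def is_ideal_def by blast+
        show "0 \<in> \<Union>C" "J \<subseteq> \<Union>C" using CF False unfolding F_def is_ideal_def by blast+
      next
        fix x y assume "x \<in> \<Union>C" "y \<in> \<Union>C"
        then obtain X Y where X: "X \<in> C" "x \<in> X" and Y: "Y \<in> C" "y \<in> Y" by blast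
        then have "x \<in> X \<and> y \<in> X \<or> x \<in> Y \<and> y \<in> Y" using chain by blast
        then show "x + y \<in> \<Union>C" using X Y CF unfolding F_def is_ideal_def by blast
      next
        fix a x assume "a \<in> A" "x \<in> \<Union>C"
        then show "a * x \<in> \<Union>C" using CF unfolding F_def is_ideal_def by blast
      qed
      then show ?thesis by blast
    qed
  qed
  from Zorn_Lemma2[OF this] obtain Q where "Q \<in> F" "\<forall>X\<in>F. Q \<subseteq> X \<longrightarrow> X = Q"
    by blast
  then have "J \<subseteq> Q" "max_disjoint A U Q" unfolding max_disjoint_def F_def by blast+
  then show ?thesis by blast
qed

definition ideal_adjoin :: "'k::field set \<Rightarrow> 'k set \<Rightarrow> 'k \<Rightarrow> 'k set" where
  "ideal_adjoin A Q a = {x + a * s | x s. x \<in> Q \<and> s \<in> A}"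

lemma ideal_adjoin_ideal:
  assumes A: "subring A" and Q: "is_ideal A Q" and a: "a \<in> A"
  shows "is_ideal A (ideal_adjoin A Q a)"
  unfolding is_ideal_def
proof (intro conjI ballI subsetI)
  show "0 \<in> ideal_adjoin A Q a"
    unfolding ideal_adjoin_def using ideal_0[OF Q] subring_0[OF A] by force
next
  fix z assume "z \<in> ideal_adjoin A Q a"
  then show "z \<in> A"
    unfolding ideal_adjoin_def using ideal_subset[OF Q] a
    by (auto intro: subring_add[OF A] subring_mult[OF A])
next
  fix z w assume "z \<in> ideal_adjoin A Q a" "w \<in> ideal_adjoin A Q a"
  then obtain x1 s1 x2 s2 where "z = x1 + a * s1" "w = x2 + a * s2"
    and "x1 \<in> Q" "s1 \<in> A" "x2 \<in> Q" "s2 \<in> A"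
    unfolding ideal_adjoin_def by blast
  then have "z + w = (x1 + x2) + a * (s1 + s2)" "x1 + x2 \<in> Q" "s1 + s2 \<in> A"
    by (auto simp: algebra_simps intro: ideal_add[OF Q] subring_add[OF A])
  then show "z + w \<in> ideal_adjoin A Q a" unfolding ideal_adjoin_def by blast
next
  fix b z assume b: "b \<in> A" and "z \<in> ideal_adjoin A Q a"
  then obtain x s where "z = x + a * s" "x \<in> Q" "s \<in> A"
    unfolding ideal_adjoin_def by blast
  then have "b * z = b * x + a * (b * s)" "b * x \<in> Q" "b * s \<in> A"
    using b by (auto simp: algebra_simps intro: ideal_mult_left[OF Q] subring_mult[OF A])
  then show "b * z \<in> ideal_adjoin A Q a" unfolding ideal_adjoin_def by blast
qed

lemma max_disjoint_escape:
  assumes A: "subring A" and Q: "max_disjoint A U Q" and a: "a \<in> A" "a \<notin> Q"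
  obtains x s where "x \<in> Q" "s \<in> A" "x + a * s \<in> U"
proof -
  have QI: "is_ideal A Q" using Q unfolding max_disjoint_def by blast
  have "Q \<subseteq> ideal_adjoin A Q a" "a \<in> ideal_adjoin A Q a"
    unfolding ideal_adjoin_def using subring_0[OF A] subring_1[OF A] ideal_0[OF QI] by force+
  with Q a ideal_adjoin_ideal[OF A QI a(1)] have "ideal_adjoin A Q a \<inter> U \<noteq> {}"
    unfolding max_disjoint_def by blast
  then show thesis using that unfolding ideal_adjoin_def by blast
qed

lemma max_disjoint_prime:
  assumes A: "subring A" and Q: "max_disjoint A U Q" and "1 \<in> U"
    and U_mult: "\<And>u v. u \<in> U \<Longrightarrow> v \<in> U \<Longrightarrow> u * v \<in> U"
  shows "is_prime A Q"
proof -
  have QI: "is_ideal A Q" and QU: "Q \<inter> U = {}" using Q unfolding max_disjoint_def by blast+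
  have "a \<in> Q \<or> b \<in> Q" if a: "a \<in> A" and b: "b \<in> A" and ab: "a * b \<in> Q" for a b
  proof (rule ccontr)
    assume "\<not> (a \<in> Q \<or> b \<in> Q)"
    then obtain x1 s1 x2 s2 where 1: "x1 \<in> Q" "s1 \<in> A" "x1 + a * s1 \<in> U"
      and 2: "x2 \<in> Q" "s2 \<in> A" "x2 + b * s2 \<in> U"
      using max_disjoint_escape[OF A Q] a b by metis
    have "x2 + b * s2 \<in> A"
      using 2 b ideal_subset[OF QI] by (blast intro: subring_add[OF A] subring_mult[OF A])
    then have "x1 * (x2 + b * s2) + x2 * (a * s1) + (a * b) * (s1 * s2) \<in> Q"
      using 1 2 a ab ideal_mult_right[OF QI] subring_mult[OF A] ideal_add[OF QI] by metis
    moreover have "(x1 + a * s1) * (x2 + b * s2)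
        = x1 * (x2 + b * s2) + x2 * (a * s1) + (a * b) * (s1 * s2)"
      by (simp add: algebra_simps)
    ultimately show False using U_mult 1 2 QU by (metis disjoint_iff)
  qed
  moreover have "Q \<noteq> A" using QU \<open>1 \<in> U\<close> subring_1[OF A] by blast
  ultimately show ?thesis unfolding is_prime_def using QI by blast
qed

lemma max_disjoint_one_maximal:
  assumes A: "subring A" and M: "max_disjoint A {1} M"
  shows "is_maximal A M"
  unfolding is_maximal_def
proof (intro conjI allI impI)
  show "is_ideal A M" "M \<noteq> A" using M subring_1[OF A] unfolding max_disjoint_def by blast+
  fix I assume I: "is_ideal A I \<and> M \<subseteq> I"
  show "I = M \<or> I = A"
  proof (cases "1 \<in> I")
    case True
    then show ?thesis using ideal_eq_if_one_mem I by blast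
  next
    case False
    then show ?thesis using I M unfolding max_disjoint_def by blast
  qed
qed

lemma maximal_max_disjoint:
  assumes A: "subring A" and M: "is_maximal A M" and U: "1 \<in> U" "M \<inter> U = {}"
  shows "max_disjoint A U M"
  unfolding max_disjoint_def
proof (intro conjI allI impI)
  show "is_ideal A M" using M unfolding is_maximal_def by blast
  fix I assume I: "is_ideal A I \<and> M \<subseteq> I \<and> I \<inter> U = {}"
  then have "I = M \<or> I = A" using M unfolding is_maximal_def by blast
  then show "I = M" using I U subring_1[OF A] by blast
qed (rule U(2))

lemma maximal_prime:
  assumes A: "subring A" and M: "is_maximal A M"
  shows "is_prime A M"
proof (rule max_disjoint_prime[OF A maximal_max_disjoint[OF A M]])
  show "M \<inter> {1} = {}" using M ideal_eq_if_one_mem unfolding is_maximal_def by blast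
qed auto

lemma ideal_subset_maximal:
  assumes "subring A" "is_ideal A J" "1 \<notin> J"
  obtains M where "is_maximal A M" "J \<subseteq> M"
  using max_disjoint_exists[of A J "{1}"] max_disjoint_one_maximal assms by blast

subsection \<open>Lying over for integral extensions\<close>

lemma monic_poly_scale:
  fixes a s :: "'a::comm_ring_1"
  shows "a ^ n * (s ^ n + (\<Sum>i<n. c i * s ^ i))
       = (a * s) ^ n + (\<Sum>i<n. c i * a ^ (n - i) * (a * s) ^ i)"
proof -
  have "a ^ n * (c i * s ^ i) = c i * a ^ (n - i) * (a * s) ^ i" if "i < n" for i
  proof -
    have "a ^ n = a ^ (n - i) * a ^ i" using that by (simp flip: power_add)
    then show ?thesis by (simp add: power_mult_distrib algebra_simps)
  qed
  then show ?thesis by (simp add: distrib_left sum_distrib_left power_mult_distrib)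
qed

lemma power_diff_mem_ideal:
  assumes "subring A" "is_ideal A I" "t \<in> A" "y \<in> A" "t - y \<in> I"
  shows "t ^ k - y ^ k \<in> I"
proof (induction k)
  case 0
  then show ?case using ideal_0[OF assms(2)] by simp
next
  case (Suc k)
  have "t ^ Suc k - y ^ Suc k = t * (t ^ k - y ^ k) + y ^ k * (t - y)"
    by (simp add: algebra_simps)
  also have "\<dots> \<in> I"
    using Suc assms by (intro ideal_add ideal_mult_left[OF assms(2)] subring_power) auto
  finally show ?case .
qed

lemma monic_poly_diff_mem_ideal:
  assumes A: "subring A" and I: "is_ideal A I" and "t \<in> A" "y \<in> A" "t - y \<in> I"
    and d: "\<And>i. i < n \<Longrightarrow> d i \<in> A"
  shows "(t ^ n + (\<Sum>i<n. d i * t ^ i)) - (y ^ n + (\<Sum>i<n. d i * y ^ i)) \<in> I"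
proof -
  have "(t ^ n + (\<Sum>i<n. d i * t ^ i)) - (y ^ n + (\<Sum>i<n. d i * y ^ i))
      = (t ^ n - y ^ n) + (\<Sum>i<n. d i * (t ^ i - y ^ i))"
    by (simp add: algebra_simps sum_subtractf)
  also have "\<dots> \<in> I"
    using assms power_diff_mem_ideal[OF A I]
    by (intro ideal_add[OF I] ideal_sum[OF I] ideal_mult_left[OF I]) auto
  finally show ?thesis .
qed

text \<open>If I \<inter> R \<subseteq> q, then an element of I + qS lying in R already lies in q: multiplying
  an integral equation of s by a^n makes a*s a root of a monic polynomial whose lower
  coefficients are in q, and t = x + a*s is congruent to a*s modulo I.\<close>

lemma integral_add_mult_mem_prime:
  assumes R: "subring R" and S: "subring S" and RS: "R \<subseteq> S" and int: "integral_over R S"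
    and I: "is_ideal S I" and q: "is_prime R q" and Iq: "I \<inter> R \<subseteq> q"
    and x: "x \<in> I" and a: "a \<in> q" and s: "s \<in> S" and tR: "x + a * s \<in> R"
  shows "x + a * s \<in> q"
proof -
  define t where "t = x + a * s"
  obtain n c where c: "\<And>i. i < n \<Longrightarrow> c i \<in> R" and eq: "s ^ n + (\<Sum>i<n. c i * s ^ i) = 0"
    using int s unfolding integral_over_def by blast
  define d where "d i = c i * a ^ (n - i)" for i
  have qI: "is_ideal R q" using prime_ideal[OF q] .
  have aR: "a \<in> R" using ideal_subset[OF qI a] .
  have d_q: "d i \<in> q" if "i < n" for i
    unfolding d_def using that c ideal_power[OF qI a] by (simp add: ideal_mult_left[OF qI])
  have tR': "t \<in> R" using tR t_def by simp
  have root: "(a * s) ^ n + (\<Sum>i<n. d i * (a * s) ^ i) = 0"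
    using monic_poly_scale[of a n s c] eq by (simp add: d_def)
  have "(t ^ n + (\<Sum>i<n. d i * t ^ i)) - 0 \<in> I"
    unfolding root[symmetric] using t_def x s tR' RS aR d_q ideal_subset[OF qI]
    by (intro monic_poly_diff_mem_ideal[OF S I]) (auto intro: subring_mult[OF S])
  moreover have "t ^ n + (\<Sum>i<n. d i * t ^ i) \<in> R"
    using tR' d_q ideal_subset[OF qI]
    by (intro subring_add[OF R] subring_power[OF R] subring_sum[OF R] subring_mult[OF R]) auto
  ultimately have "t ^ n + (\<Sum>i<n. d i * t ^ i) \<in> q" using Iq by auto
  moreover have "(\<Sum>i<n. d i * t ^ i) \<in> q"
    using d_q tR' by (intro ideal_sum[OF qI] ideal_mult_right[OF qI] subring_power[OF R])
  ultimately have "t ^ n \<in> q" using ideal_diff[OF R qI] by fastforce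
  then show ?thesis using prime_power_mem[OF R q tR'] t_def by simp
qed

lemma integral_max_disjoint_contraction:
  assumes R: "subring R" and S: "subring S" and RS: "R \<subseteq> S" and int: "integral_over R S"
    and q: "is_prime R q" and Q: "max_disjoint S (R - q) Q"
  shows "Q \<inter> R = q"
proof
  have QI: "is_ideal S Q" and Qq: "Q \<inter> R \<subseteq> q" using Q unfolding max_disjoint_def by blast+
  then show "Q \<inter> R \<subseteq> q" by blast
  show "q \<subseteq> Q \<inter> R"
  proof
    fix a assume a: "a \<in> q"
    then have aR: "a \<in> R" using ideal_subset[OF prime_ideal[OF q]] by blast
    show "a \<in> Q \<inter> R"
    proof (rule ccontr)
      assume "a \<notin> Q \<inter> R"
      then obtain x s where "x \<in> Q" "s \<in> S" "x + a * s \<in> R - q"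
        using max_disjoint_escape[OF S Q] aR RS by blast
      then show False
        using integral_add_mult_mem_prime[OF R S RS int QI q Qq _ a] by blast
    qed
  qed
qed

lemma prime_compl_mult:
  "is_prime R q \<Longrightarrow> subring R \<Longrightarrow> u \<in> R - q \<Longrightarrow> v \<in> R - q \<Longrightarrow> u * v \<in> R - q"
  unfolding is_prime_def using subring_mult by blast

lemma integral_max_disjoint_prime_over:
  assumes R: "subring R" and S: "subring S" and RS: "R \<subseteq> S" and int: "integral_over R S"
    and q: "is_prime R q" and Q: "max_disjoint S (R - q) Q"
  shows "is_prime S Q" "Q \<inter> R = q"
  using max_disjoint_prime[OF S Q] prime_compl_mult[OF q R] subring_1[OF R]
    prime_one_not_mem[OF q] integral_max_disjoint_contraction[OF assms]
  by auto

subsection \<open>Integral extensions with injective map of spectra\<close>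

lemma integral_local_if_inj_Spec:
  assumes R: "subring R" and S: "subring S" and RS: "R \<subseteq> S" and int: "integral_over R S"
    and loc: "local_ring R" and inj: "inj_on (\<lambda>P. P \<inter> R) (Spec S)"
  shows "local_ring S"
proof -
  obtain m where m: "is_maximal R m" and m_unique: "\<And>M. is_maximal R M \<Longrightarrow> M = m"
    using loc unfolding local_ring_def by blast
  have m_prime: "is_prime R m" using maximal_prime[OF R m] .
  have over_m: "is_prime S M \<and> M \<inter> R = m" if M: "is_maximal S M" for M
  proof -
    have MI: "is_ideal S M" and "1 \<notin> M"
      using M ideal_eq_if_one_mem unfolding is_maximal_def by blast+
    then have "M \<inter> R \<subseteq> m"
      using ideal_subset_maximal[OF R ideal_contraction[OF MI RS R]] m_unique by blast
    then have "max_disjoint S (R - m) M"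
      using maximal_max_disjoint[OF S M] subring_1[OF R] prime_one_not_mem[OF m_prime] by blast
    then show ?thesis using integral_max_disjoint_prime_over[OF R S RS int m_prime] by blast
  qed
  have "is_ideal S {0}" "1 \<notin> {0::'a}"
    unfolding is_ideal_def using subring_0[OF S] by auto
  then obtain M0 where M0: "is_maximal S M0" using ideal_subset_maximal[OF S] by blast
  have "M = M0" if "is_maximal S M" for M
    using inj_onD[OF inj] over_m[OF that] over_m[OF M0] unfolding Spec_def by simp
  then show ?thesis unfolding local_ring_def using M0 by blast
qed

lemma integral_going_down_if_bij_Spec:
  assumes R: "subring R" and S: "subring S" and RS: "R \<subseteq> S" and int: "integral_over R S"
    and bij: "bij_betw (\<lambda>P. P \<inter> R) (Spec S) (Spec R)"
  shows "going_down R S"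
  unfolding going_down_def
proof (intro allI impI)
  fix p q Q
  assume "is_prime R p \<and> is_prime R q \<and> p \<subseteq> q \<and> is_prime S Q \<and> Q \<inter> R = q"
  then have p: "is_prime R p" and q: "is_prime R q" and pq: "p \<subseteq> q"
    and Q: "is_prime S Q" and Qq: "Q \<inter> R = q" by auto
  have inj: "inj_on (\<lambda>P. P \<inter> R) (Spec S)" and surj: "(\<lambda>P. P \<inter> R) ` Spec S = Spec R"
    using bij unfolding bij_betw_def by blast+
  have "p \<in> (\<lambda>P. P \<inter> R) ` Spec S" using surj p unfolding Spec_def by blast
  then obtain P where P: "is_prime S P" and Pp: "P \<inter> R = p" unfolding Spec_def by blast
  have "P \<inter> (R - q) = {}" using Pp pq by blast
  then obtain Q' where PQ': "P \<subseteq> Q'" and Q': "max_disjoint S (R - q) Q'"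
    using max_disjoint_exists[OF prime_ideal[OF P]] by blast
  have "is_prime S Q'" "Q' \<inter> R = Q \<inter> R"
    using integral_max_disjoint_prime_over[OF R S RS int q Q'] Qq by auto
  then have "Q' = Q" using inj_onD[OF inj] Q unfolding Spec_def by blast
  then show "\<exists>P. is_prime S P \<and> P \<subseteq> Q \<and> P \<inter> R = p" using P Pp PQ' by blast
qed

subsection \<open>Integral localizations\<close>

lemma integral_inverse_mem:
  assumes R: "subring R" and t: "t \<in> R" "t \<noteq> 0"
    and c: "\<And>i. i < n \<Longrightarrow> c i \<in> R" and eq: "(1 / t) ^ n + (\<Sum>i<n. c i * (1 / t) ^ i) = 0"
  shows "1 / t \<in> R"
proof (cases n)
  case 0
  then show ?thesis using eq by simp
next
  case (Suc m)
  define u where "u = 1 / t"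
  have tu_power: "t ^ m * u ^ i = t ^ (m - i)" if "i \<le> m" for i
  proof -
    have "t ^ m = t ^ (m - i) * t ^ i" using that by (simp flip: power_add)
    then show ?thesis using t(2) by (simp add: u_def power_divide)
  qed
  have "t ^ m * u ^ n = u"
    using tu_power[of m] Suc by (simp add: algebra_simps)
  moreover have "t ^ m * (\<Sum>i<n. c i * u ^ i) = (\<Sum>i<n. c i * t ^ (m - i))"
    unfolding sum_distrib_left using tu_power Suc by (intro sum.cong) (auto simp: algebra_simps)
  moreover have "t ^ m * (u ^ n + (\<Sum>i<n. c i * u ^ i)) = 0" using eq u_def by simp
  ultimately have "u = - (\<Sum>i<n. c i * t ^ (m - i))"
    by (simp add: distrib_left eq_neg_iff_add_eq_0)
  also have "\<dots> \<in> R"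
    using c t by (intro subring_uminus[OF R] subring_sum[OF R] subring_mult[OF R] subring_power[OF R])
  finally show ?thesis unfolding u_def .
qed

lemma integral_localization_subset:
  assumes R: "subring R" and loc: "is_localization R S" and int: "integral_over R S"
  shows "S \<subseteq> R"
proof
  obtain T where T: "T \<subseteq> R" "0 \<notin> T" and S_def: "S = {r / t | r t. r \<in> R \<and> t \<in> T}"
    using loc unfolding is_localization_def by blast
  fix z assume "z \<in> S"
  then obtain r t where z: "z = r / t" "r \<in> R" "t \<in> T" using S_def by blast
  have "1 / t \<in> S" using S_def subring_1[OF R] z(3) by blast
  then obtain n c where "\<forall>i<n. c i \<in> R" "(1 / t) ^ n + (\<Sum>i<n. c i * (1 / t) ^ i) = 0"
    using int unfolding integral_over_def by blast
  then have "1 / t \<in> R" using integral_inverse_mem[OF R] z(3) T by blast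
  then show "z \<in> R" using subring_mult[OF R z(2)] z(1) by fastforce
qed

theorem proposition3p3:
  fixes R S :: "'k::field set"
  assumes "subring R"
    and "local_ring R"
    and "perinormal R"
    and "overring R S"
    and "integral_over R S"
    and "bij_betw (\<lambda>P. P \<inter> R) (Spec S) (Spec R)"
  shows "S = R"
proof -
  have S: "subring S" and RS: "R \<subseteq> S" using assms(4) unfolding overring_def by auto
  have "local_ring S"
    using integral_local_if_inj_Spec[OF assms(1) S RS assms(5,2)] assms(6)
    unfolding bij_betw_def by blast
  moreover have "going_down R S"
    using integral_going_down_if_bij_Spec[OF assms(1) S RS assms(5,6)] .
  ultimately have "is_localization R S"
    using assms(3,4) unfolding perinormal_def by blast
  then show ?thesis
    using integral_localization_subset[OF assms(1) _ assms(5)] RS by blast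
qed

end
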